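(* Let $(X,Y)$ be random with $Y\in\{0,1\}$, let $f$ take values in $S=\{s_1,\dots,s_B\}\subseteq[0,1]$, and let $T_n=\{(x_j,y_j)\}_{j=1}^n$ be i.i.d. from $(X,Y)$. Let $0\le c<0.5$ and $0<\delta<1$. Conditional on any realization of $(f(x_1),\dots,f(x_n))$ for which $|\hat p_i-p_i|<c\,p_i$ for all $i$, with probability at least $1-\delta$, $0\le \sum_{i=1}^B\hat p_i(\hat y_i-y_i^* )^2\le\frac{B}{2n}\log\frac{2B}{\delta}$.
   Context: $p_i=\Pr(f(X)=s_i)$, $y_i^*=\mathbb{E}[Y\mid f(X)=s_i]$. $\hat p_i=|\{j:f(x_j)=s_i\}|/n$ and $\hat y_i$ is the average of $y_j$ over $j$ with $f(x_j)=s_i$. *)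

theory Defs
  imports "HOL-Probability.Probability"
begin

definition phat :: "nat \<Rightarrow> (nat \<Rightarrow> real) \<Rightarrow> real \<Rightarrow> real" where
  "phat n v s = real (card {j. j < n \<and> v j = s}) / real n"

definition yhat :: "nat \<Rightarrow> (nat \<Rightarrow> real) \<Rightarrow> (nat \<Rightarrow> real) \<Rightarrow> real \<Rightarrow> real" where
  "yhat n v y s = (\<Sum>j | j < n \<and> v j = s. y j) / real (card {j. j < n \<and> v j = s})"

text \<open>Population quantities, for D the joint law of (X,Y):
  pop_p D f s = Pr(f(X) = s),  ystar D f s = E[Y | f(X) = s].\<close>
definition pop_p :: "('x \<times> real) measure \<Rightarrow> ('x \<Rightarrow> real) \<Rightarrow> real \<Rightarrow> real" where
  "pop_p D f s = measure D {z \<in> space D. f (fst z) = s}"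

definition ystar :: "('x \<times> real) measure \<Rightarrow> ('x \<Rightarrow> real) \<Rightarrow> real \<Rightarrow> real" where
  "ystar D f s = (\<integral>z. snd z * indicator {z \<in> space D. f (fst z) = s} z \<partial>D) / pop_p D f s"

definition condP :: "'w measure \<Rightarrow> ('w \<Rightarrow> bool) \<Rightarrow> ('w \<Rightarrow> bool) \<Rightarrow> real" where
  "condP M A Q = measure M {\<omega> \<in> space M. A \<omega> \<and> Q \<omega>} / measure M {\<omega> \<in> space M. Q \<omega>}"

end

theory Submission
  imports Defs
begin

(* Conditionally on the scores f(X_j) = r_j, the pairs (X_j, Y_j) remain independent, and Y_j is
   distributed as Y given f(X) = r_j: it lies in [0,1] and has mean y*(r_j).  The bin of a score s
   holds m_s = n p^_s samples, and m_s > 0 because |p^_s - p_s| < c p_s with c < 1.  With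
   L = ln (2B/delta), Hoeffding's inequality bounds the probability that the labels of bin s
   deviate from their mean by |sum Y_j - m_s y*_s| >= sqrt (m_s L / 2) by 2 exp (-L) = delta/B.
   Outside the union of these B events every term
   p^_s (y^_s - y*_s)^2 = (sum Y_j - m_s y*_s)^2 / (n m_s) is below L/(2n). *)

lemma weighted_sq_dev_le:
  fixes a y L :: real and m n :: nat
  assumes "0 < m" "0 < n" "0 \<le> L" "\<bar>a - m * y\<bar> < sqrt (m * L / 2)"
  shows "m / n * (a / m - y)\<^sup>2 \<le> L / (2 * real n)"
proof -
  have dev: "(a - m * y)\<^sup>2 \<le> m * L / 2"
    using assms(3,4) by (metis less_imp_le real_sqrt_abs real_sqrt_le_iff)
  have "a / m - y = (a - m * y) / m"
    using assms(1) by (simp add: field_simps)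
  then have "m / n * (a / m - y)\<^sup>2 = (a - m * y)\<^sup>2 / (real m * real n)"
    using assms(1) by (simp add: power_divide power2_eq_square)
  also have "\<dots> \<le> (m * L / 2) / (real m * real n)"
    using dev by (intro divide_right_mono) simp_all
  also have "\<dots> = L / (2 * real n)"
    using assms(1) by simp
  finally show ?thesis .
qed

lemma relative_error_imp_pos:
  fixes a b c :: real
  assumes "\<bar>a - b\<bar> < c * b" "0 \<le> c" "c < 1"
  shows "0 < b" "0 < a"
proof -
  show "0 < b"
    using assms by (smt (verit) mult_nonneg_nonpos)
  then show "0 < a"
    using assms by (smt (verit) mult_less_cancel_right2)
qed

lemma (in prob_space) Hoeffding_sum_deviation:
  fixes Y :: "'i \<Rightarrow> 'a \<Rightarrow> real" and \<mu> L :: real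
  assumes "finite J" "J \<noteq> {}" "indep_vars (\<lambda>_. borel) Y J"
    and "\<And>j. j \<in> J \<Longrightarrow> AE \<omega> in M. Y j \<omega> \<in> {0..1}"
    and "\<And>j. j \<in> J \<Longrightarrow> expectation (Y j) = \<mu>" and "0 \<le> L"
  shows "prob {\<omega> \<in> space M. sqrt (card J * L / 2) \<le> \<bar>(\<Sum>j\<in>J. Y j \<omega>) - card J * \<mu>\<bar>}
           \<le> 2 * exp (- L)"
proof -
  interpret Hoeffding_ineq M J Y "\<lambda>_. 0" "\<lambda>_. 1" "\<Sum>j\<in>J. expectation (Y j)"
    by unfold_locales (use assms in simp_all)
  have "(\<Sum>j\<in>J. expectation (Y j)) = card J * \<mu>"
    using assms(5) by simp
  moreover have "card J > 0"
    using assms(1,2) by (simp add: card_gt_0_iff)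
  ultimately show ?thesis
    using Hoeffding_ineq_abs_ge[of "sqrt (card J * L / 2)"] assms(6) by simp
qed

lemma phat_cong: "(\<And>j. j < n \<Longrightarrow> v j = w j) \<Longrightarrow> phat n v = phat n w"
  by (simp add: fun_eq_iff phat_def cong: conj_cong)

lemma yhat_cong: "(\<And>j. j < n \<Longrightarrow> v j = w j) \<Longrightarrow> yhat n v = yhat n w"
  by (simp add: fun_eq_iff yhat_def cong: conj_cong)

lemma phat_nonneg: "0 \<le> phat n v s"
  by (simp add: phat_def)

lemma binned_sq_error_le:
  fixes y r :: "nat \<Rightarrow> real" and \<mu> :: "real \<Rightarrow> real" and L :: real
  assumes "0 < n" "0 \<le> L" and bins: "\<And>s. s \<in> S \<Longrightarrow> 0 < phat n r s"
    and dev: "\<And>s. s \<in> S \<Longrightarrow> \<bar>(\<Sum>j | j < n \<and> r j = s. y j) - card {j. j < n \<and> r j = s} * \<mu> s\<bar>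
                          < sqrt (card {j. j < n \<and> r j = s} * L / 2)"
  shows "(\<Sum>s\<in>S. phat n r s * (yhat n r y s - \<mu> s)\<^sup>2) \<le> card S / (2 * real n) * L"
proof -
  have "phat n r s * (yhat n r y s - \<mu> s)\<^sup>2 \<le> L / (2 * real n)" if "s \<in> S" for s
  proof -
    have "0 < card {j. j < n \<and> r j = s}"
      using bins[OF that] by (simp add: phat_def zero_less_divide_iff)
    then show ?thesis
      unfolding phat_def yhat_def using assms(1,2) dev[OF that] by (rule weighted_sq_dev_le)
  qed
  then have "(\<Sum>s\<in>S. phat n r s * (yhat n r y s - \<mu> s)\<^sup>2) \<le> (\<Sum>s\<in>S. L / (2 * real n))"
    by (rule sum_mono)
  then show ?thesis
    by simp
qed

lemma (in prob_space) prob_binned_sq_error_le: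
  fixes Y :: "nat \<Rightarrow> 'a \<Rightarrow> real" and r :: "nat \<Rightarrow> real" and \<mu> :: "real \<Rightarrow> real"
  assumes "0 < n" and indep: "indep_vars (\<lambda>_. borel) Y {..<n}"
    and range: "\<And>j. j < n \<Longrightarrow> AE \<omega> in M. Y j \<omega> \<in> {0..1}"
    and mean: "\<And>j. j < n \<Longrightarrow> expectation (Y j) = \<mu> (r j)"
    and "finite S" "S \<noteq> {}" and bins: "\<And>s. s \<in> S \<Longrightarrow> 0 < phat n r s"
    and "0 < \<delta>" "\<delta> < 1"
  shows "1 - \<delta> \<le> prob {\<omega> \<in> space M.
           (\<Sum>s\<in>S. phat n r s * (yhat n r (\<lambda>j. Y j \<omega>) s - \<mu> s)\<^sup>2)
             \<le> card S / (2 * real n) * ln (2 * real (card S) / \<delta>)}"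
proof -
  define L where "L = ln (2 * real (card S) / \<delta>)"
  define J where "J s = {j. j < n \<and> r j = s}" for s
  define Bad where
    "Bad s = {\<omega> \<in> space M. sqrt (card (J s) * L / 2) \<le> \<bar>(\<Sum>j\<in>J s. Y j \<omega>) - card (J s) * \<mu> s\<bar>}" for s
  have card_S: "0 < card S"
    using \<open>finite S\<close> \<open>S \<noteq> {}\<close> by (simp add: card_gt_0_iff)
  have "0 < L"
    using card_S \<open>0 < \<delta>\<close> \<open>\<delta> < 1\<close> by (simp add: L_def field_simps)
  have J_sub: "J s \<subseteq> {..<n}" for s
    by (auto simp: J_def)
  have J_ne: "J s \<noteq> {}" if "s \<in> S" for s
    using bins[OF that] by (auto simp: phat_def J_def[symmetric])
  have [measurable]: "(\<lambda>\<omega>. \<Sum>j\<in>J s. Y j \<omega>) \<in> borel_measurable M" for s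
    using J_sub indep by (intro borel_measurable_sum) (auto simp: indep_vars_def)
  have Bad_prob: "prob (Bad s) \<le> \<delta> / card S" if "s \<in> S" for s
  proof -
    have "prob (Bad s) \<le> 2 * exp (- L)"
      unfolding Bad_def using J_sub J_ne[OF that] \<open>0 < L\<close> range mean
      by (intro Hoeffding_sum_deviation indep_vars_subset[OF indep])
        (auto simp: J_def intro: finite_subset)
    also have "2 * exp (- L) = \<delta> / card S"
      using card_S \<open>0 < \<delta>\<close> by (simp add: L_def exp_minus field_simps)
    finally show ?thesis .
  qed
  have "prob (\<Union>s\<in>S. Bad s) \<le> (\<Sum>s\<in>S. prob (Bad s))"
    by (rule finite_measure_subadditive_finite) (auto simp: Bad_def \<open>finite S\<close>)
  also have "\<dots> \<le> (\<Sum>s\<in>S. \<delta> / card S)"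
    by (rule sum_mono) (rule Bad_prob)
  also have "\<dots> = \<delta>"
    using card_S by simp
  finally have "1 - \<delta> \<le> prob (space M - (\<Union>s\<in>S. Bad s))"
    by (subst prob_compl) (auto simp: Bad_def \<open>finite S\<close>)
  also have "\<dots> \<le> prob {\<omega> \<in> space M.
      (\<Sum>s\<in>S. phat n r s * (yhat n r (\<lambda>j. Y j \<omega>) s - \<mu> s)\<^sup>2) \<le> card S / (2 * real n) * L}"
  proof (rule finite_measure_mono)
    show "space M - (\<Union>s\<in>S. Bad s) \<subseteq> {\<omega> \<in> space M.
      (\<Sum>s\<in>S. phat n r s * (yhat n r (\<lambda>j. Y j \<omega>) s - \<mu> s)\<^sup>2) \<le> card S / (2 * real n) * L}"
      using \<open>0 < n\<close> \<open>0 < L\<close> bins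
      by (intro subsetI CollectI conjI binned_sq_error_le) (auto simp: Bad_def J_def not_le)
  qed (unfold yhat_def J_def[symmetric], measurable)
  finally show ?thesis
    unfolding L_def .
qed

lemma integral_uniform_measure:
  fixes g :: "'a \<Rightarrow> real"
  assumes "emeasure M A \<noteq> 0" "emeasure M A \<noteq> \<infinity>" and [measurable]: "g \<in> borel_measurable M"
  shows "integral\<^sup>L (uniform_measure M A) g = integral\<^sup>L M (\<lambda>x. g x * indicator A x) / measure M A"
proof -
  have [measurable]: "A \<in> sets M"
    using assms(1) by (rule emeasure_neq_0_sets)
  have "0 < measure M A"
    using assms(1,2) by (simp add: emeasure_eq_ennreal_measure order_less_le)
  then have "1 / emeasure M A = ennreal (1 / measure M A)"
    using assms(2) by (simp add: emeasure_eq_ennreal_measure divide_ennreal flip: ennreal_1)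
  then have "uniform_measure M A = density M (\<lambda>x. ennreal (indicator A x / measure M A))"
    unfolding uniform_measure_def
    by (intro density_cong) (auto split: split_indicator)
  then show ?thesis
    by (simp add: integral_density mult.commute)
qed

locale iid_rectangle_conditioning = prob_space +
  fixes K :: "'b measure" and D :: "'b measure" and Z :: "'i \<Rightarrow> 'a \<Rightarrow> 'b"
    and I :: "'i set" and R :: "'i \<Rightarrow> 'b set"
  assumes finite_I: "finite I"
    and indep_Z: "indep_vars (\<lambda>_. K) Z I"
    and distr_Z: "\<And>j. j \<in> I \<Longrightarrow> distr M K (Z j) = D"
    and sets_R: "\<And>j. j \<in> I \<Longrightarrow> R j \<in> sets K"
    and measure_R_pos: "\<And>j. j \<in> I \<Longrightarrow> 0 < measure D (R j)"
begin

definition cond_event :: "'a set" where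
  "cond_event = {\<omega> \<in> space M. \<forall>j\<in>I. Z j \<omega> \<in> R j}"

lemma measurable_Z: "j \<in> I \<Longrightarrow> Z j \<in> measurable M K"
  using indep_Z by (simp add: indep_vars_def)

lemma sets_D: "j \<in> I \<Longrightarrow> sets D = sets K"
  using distr_Z by (metis sets_distr)

lemma prob_space_D: "j \<in> I \<Longrightarrow> prob_space D"
  using distr_Z prob_space_distr measurable_Z by metis

lemma sets_rectangle:
  assumes "\<And>j. j \<in> J \<Longrightarrow> B j \<in> sets K" "J \<subseteq> I"
  shows "{\<omega> \<in> space M. \<forall>j\<in>J. Z j \<omega> \<in> B j} \<in> events"
proof (rule sets.sets_Collect_finite_All)
  fix j assume "j \<in> J"
  then have "Z j -` B j \<inter> space M \<in> events"
    using assms measurable_Z by (intro measurable_sets) auto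
  then show "{\<omega> \<in> space M. Z j \<omega> \<in> B j} \<in> events"
    by (simp add: vimage_def Int_def conj_commute)
qed (rule finite_subset[OF assms(2) finite_I])

lemma prob_rectangle:
  assumes "\<And>j. j \<in> I \<Longrightarrow> B j \<in> sets K"
  shows "prob {\<omega> \<in> space M. \<forall>j\<in>I. Z j \<omega> \<in> B j} = (\<Prod>j\<in>I. measure D (B j))"
proof (cases "I = {}")
  case False
  have "{\<omega> \<in> space M. \<forall>j\<in>I. Z j \<omega> \<in> B j} = (\<Inter>j\<in>I. Z j -` B j \<inter> space M)"
    using False by auto
  moreover have "prob (Z j -` B j \<inter> space M) = measure D (B j)" if "j \<in> I" for j
    using that assms measurable_Z by (simp flip: distr_Z[OF that] add: measure_distr)
  ultimately show ?thesis
    using indep_varsD[OF indep_Z False finite_I] assms by simp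
qed (simp add: prob_space)

lemma cond_event_in_events: "cond_event \<in> events"
  unfolding cond_event_def by (rule sets_rectangle) (auto intro: sets_R)

lemma prob_cond_event_pos: "0 < prob cond_event"
  unfolding cond_event_def using sets_R measure_R_pos
  by (simp add: prob_rectangle prod_pos)

abbreviation conditioned :: "'a measure" where
  "conditioned \<equiv> uniform_measure M cond_event"

lemma emeasure_cond_event: "emeasure M cond_event \<noteq> 0" "emeasure M cond_event \<noteq> \<infinity>"
  using prob_cond_event_pos by (simp_all add: emeasure_eq_measure)

sublocale conditioned: prob_space conditioned
  by (rule prob_space_uniform_measure[OF emeasure_cond_event])

lemma measure_conditioned_rectangle:
  assumes "J \<subseteq> I" "\<And>j. j \<in> J \<Longrightarrow> A j \<in> sets K"
  shows "measure conditioned {\<omega> \<in> space M. \<forall>j\<in>J. Z j \<omega> \<in> A j}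
           = (\<Prod>j\<in>J. measure D (R j \<inter> A j) / measure D (R j))"
proof -
  define B where "B j = (if j \<in> J then R j \<inter> A j else R j)" for j
  have B_sets: "B j \<in> sets K" if "j \<in> I" for j
    using that assms sets_R by (auto simp: B_def)
  have rectangle: "{\<omega> \<in> space M. \<forall>j\<in>J. Z j \<omega> \<in> A j} \<in> events"
    using assms by (intro sets_rectangle)
  have "cond_event \<inter> {\<omega> \<in> space M. \<forall>j\<in>J. Z j \<omega> \<in> A j} = {\<omega> \<in> space M. \<forall>j\<in>I. Z j \<omega> \<in> B j}"
    using assms(1) by (auto simp: cond_event_def B_def)
  then have "measure conditioned {\<omega> \<in> space M. \<forall>j\<in>J. Z j \<omega> \<in> A j}
      = prob {\<omega> \<in> space M. \<forall>j\<in>I. Z j \<omega> \<in> B j} / prob cond_event"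
    by (simp add: measure_uniform_measure[OF emeasure_cond_event rectangle])
  also have "\<dots> = (\<Prod>j\<in>I. measure D (B j)) / (\<Prod>j\<in>I. measure D (R j))"
    using prob_rectangle[OF B_sets] prob_rectangle[OF sets_R] by (simp add: cond_event_def)
  also have "\<dots> = (\<Prod>j\<in>I. if j \<in> J then measure D (R j \<inter> A j) / measure D (R j) else 1)"
    unfolding prod_dividef[symmetric]
    by (intro prod.cong refl) (simp add: B_def measure_R_pos[THEN less_imp_neq, THEN not_sym])
  also have "\<dots> = (\<Prod>j\<in>J. measure D (R j \<inter> A j) / measure D (R j))"
    using assms(1) by (simp add: prod.inter_restrict[OF finite_I, symmetric] Int_absorb1)
  finally show ?thesis .
qed

lemma measure_conditioned_component:
  assumes "j \<in> I" "A \<in> sets K"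
  shows "measure conditioned {\<omega> \<in> space M. Z j \<omega> \<in> A} = measure D (R j \<inter> A) / measure D (R j)"
  using measure_conditioned_rectangle[of "{j}" "\<lambda>_. A"] assms by simp

lemma indep_vars_conditioned: "conditioned.indep_vars (\<lambda>_. K) Z I"
  unfolding conditioned.indep_vars_def2
proof (intro conjI ballI conditioned.indep_setsI)
  fix j assume "j \<in> I"
  then show "Z j \<in> measurable conditioned K"
    using measurable_Z by (simp add: measurable_def)
  then show "{Z j -` A \<inter> space conditioned |A. A \<in> sets K} \<subseteq> sets conditioned"
    using measurable_sets by blast
next
  fix A J assume J: "J \<noteq> {}" "J \<subseteq> I" "finite J"
    and A: "\<forall>j\<in>J. A j \<in> {Z j -` B \<inter> space conditioned |B. B \<in> sets K}"
  then obtain B where B: "\<And>j. j \<in> J \<Longrightarrow> A j = Z j -` B j \<inter> space M \<and> B j \<in> sets K"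
    by simp metis
  have "(\<Inter>j\<in>J. A j) = {\<omega> \<in> space M. \<forall>j\<in>J. Z j \<omega> \<in> B j}"
    using B J(1) by auto
  moreover have "A j = {\<omega> \<in> space M. Z j \<omega> \<in> B j}" if "j \<in> J" for j
    using B[OF that] by auto
  ultimately show "measure conditioned (\<Inter>j\<in>J. A j) = (\<Prod>j\<in>J. measure conditioned (A j))"
    using J B
    by (simp add: measure_conditioned_rectangle measure_conditioned_component subset_iff
        cong: prod.cong)
qed

lemma distr_conditioned:
  assumes "j \<in> I"
  shows "distr conditioned K (Z j) = uniform_measure D (R j)"
proof (rule measure_eqI)
  show "sets (distr conditioned K (Z j)) = sets (uniform_measure D (R j))"
    using sets_D[OF assms] by simp
  fix A assume "A \<in> sets (distr conditioned K (Z j))"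
  then have A: "A \<in> sets K"
    by simp
  interpret D: prob_space D
    using assms by (rule prob_space_D)
  have "emeasure (distr conditioned K (Z j)) A = measure conditioned {\<omega> \<in> space M. Z j \<omega> \<in> A}"
    using A assms measurable_Z
    by (simp add: emeasure_distr conditioned.emeasure_eq_measure vimage_def Int_def conj_commute
        measurable_def)
  also have "\<dots> = measure D (R j \<inter> A) / measure D (R j)"
    using measure_conditioned_component[OF assms A] by simp
  also have "\<dots> = emeasure (uniform_measure D (R j)) A"
    using A sets_R[OF assms] measure_R_pos[OF assms] sets_D[OF assms]
    by (simp add: D.emeasure_eq_measure divide_ennreal)
  finally show "emeasure (distr conditioned K (Z j)) A = emeasure (uniform_measure D (R j)) A" .
qed

lemma AE_conditioned:
  assumes "j \<in> I" "AE z in D. P z" "{z \<in> space K. P z} \<in> sets K"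
  shows "AE \<omega> in conditioned. P (Z j \<omega>)"
proof -
  have "AE z in distr conditioned K (Z j). P z"
    unfolding distr_conditioned[OF assms(1)]
    using assms(2)
    by (intro AE_uniform_measureI) (auto simp: sets_R[OF assms(1)] sets_D[OF assms(1)])
  then show ?thesis
    using measurable_Z[OF assms(1)] assms(3)
    by (subst (asm) AE_distr_iff) (simp_all add: measurable_def)
qed

lemma expectation_conditioned:
  fixes g :: "'b \<Rightarrow> real"
  assumes "j \<in> I" "g \<in> borel_measurable K"
  shows "conditioned.expectation (\<lambda>\<omega>. g (Z j \<omega>))
           = integral\<^sup>L D (\<lambda>z. g z * indicator (R j) z) / measure D (R j)"
proof -
  interpret D: prob_space D
    using assms(1) by (rule prob_space_D)
  have "g \<in> borel_measurable D"
    using assms(2) measurable_cong_sets[OF sets_D[OF assms(1)] refl] by blast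
  moreover have "conditioned.expectation (\<lambda>\<omega>. g (Z j \<omega>)) = integral\<^sup>L (uniform_measure D (R j)) g"
    using assms measurable_Z by (simp flip: distr_conditioned add: integral_distr measurable_def)
  ultimately show ?thesis
    using measure_R_pos[OF assms(1)] by (simp add: integral_uniform_measure D.emeasure_eq_measure)
qed

end

lemma (in prob_space) labels_conditioned_on_scores:
  fixes Xs :: "nat \<Rightarrow> 'a \<Rightarrow> 'x" and Ys :: "nat \<Rightarrow> 'a \<Rightarrow> real"
  assumes indep: "indep_vars (\<lambda>_. N \<Otimes>\<^sub>M borel) (\<lambda>j \<omega>. (Xs j \<omega>, Ys j \<omega>)) {..<n}"
    and distr: "\<forall>j<n. distr M (N \<Otimes>\<^sub>M borel) (\<lambda>\<omega>. (Xs j \<omega>, Ys j \<omega>)) = D"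
    and labels: "AE z in D. snd z \<in> {0..1}"
    and f: "f \<in> borel_measurable N"
    and pos: "\<And>j. j < n \<Longrightarrow> 0 < pop_p D f (r j)"
    and Q_def: "Q = {\<omega> \<in> space M. \<forall>j<n. f (Xs j \<omega>) = r j}"
  shows "Q \<in> events" and "prob_space (uniform_measure M Q)"
    and "prob_space.indep_vars (uniform_measure M Q) (\<lambda>_. borel) Ys {..<n}"
    and "\<And>j. j < n \<Longrightarrow> AE \<omega> in uniform_measure M Q. Ys j \<omega> \<in> {0..1}"
    and "\<And>j. j < n \<Longrightarrow> prob_space.expectation (uniform_measure M Q) (Ys j) = ystar D f (r j)"
proof -
  define Z where "Z = (\<lambda>j \<omega>. (Xs j \<omega>, Ys j \<omega>))"
  define R :: "nat \<Rightarrow> ('x \<times> real) set" where "R j = {z \<in> space (N \<Otimes>\<^sub>M borel). f (fst z) = r j}" for j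
  have space_D: "space D = space (N \<Otimes>\<^sub>M borel)" if "j < n" for j
    using distr that by (metis space_distr)
  interpret C: iid_rectangle_conditioning M "N \<Otimes>\<^sub>M borel" D Z "{..<n}" R
  proof
    show "j \<in> {..<n} \<Longrightarrow> 0 < measure D (R j)" for j
      using pos space_D by (simp add: R_def pop_p_def)
  qed (use indep distr f in \<open>auto simp: Z_def R_def\<close>)
  have Q_eq: "Q = C.cond_event"
    using C.measurable_Z[THEN measurable_space] unfolding Q_def C.cond_event_def
    by (auto simp: Z_def R_def space_pair_measure)
  show "Q \<in> events" "prob_space (uniform_measure M Q)"
    unfolding Q_eq by (simp_all add: C.cond_event_in_events C.conditioned.prob_space_axioms)
  show "prob_space.indep_vars (uniform_measure M Q) (\<lambda>_. borel) Ys {..<n}"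
    using C.conditioned.indep_vars_compose2[OF C.indep_vars_conditioned, of "\<lambda>_. snd"]
    by (simp add: Q_eq Z_def)
  show "AE \<omega> in uniform_measure M Q. Ys j \<omega> \<in> {0..1}" if "j < n" for j
    using C.AE_conditioned[of j "\<lambda>z. snd z \<in> {0..1}"] labels that
    unfolding Q_eq by (simp add: Z_def)
  show "prob_space.expectation (uniform_measure M Q) (Ys j) = ystar D f (r j)" if "j < n" for j
    using C.expectation_conditioned[of j snd] that space_D[OF that]
    by (simp add: Q_eq Z_def ystar_def pop_p_def R_def)
qed

lemma (in prob_space) condP_eq_uniform_measure:
  assumes "Measurable.pred M A'" "{\<omega> \<in> space M. Q \<omega>} \<in> events"
    and "\<And>\<omega>. \<omega> \<in> space M \<Longrightarrow> Q \<omega> \<Longrightarrow> A \<omega> = A' \<omega>"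
  shows "condP M A Q = \<P>(\<omega> in uniform_measure M {\<omega> \<in> space M. Q \<omega>}. A' \<omega>)"
proof -
  have "{\<omega> \<in> space M. A \<omega> \<and> Q \<omega>} = {\<omega> \<in> space M. A' \<omega> \<and> Q \<omega>}"
    using assms(3) by auto
  then have "condP M A Q = \<P>(\<omega> in M. A' \<omega> \<bar> Q \<omega>)"
    by (simp add: condP_def cond_prob_def)
  also have "\<dots> = \<P>(\<omega> in uniform_measure M {\<omega> \<in> space M. Q \<omega>}. A' \<omega>)"
    using assms(2) unfolding pred_def[symmetric]
    by (rule measure_uniform_measure_eq_cond_prob[OF assms(1), symmetric])
  finally show ?thesis .
qed

lemma (in prob_space) condP_binned_sq_error_eq:
  fixes Xs :: "nat \<Rightarrow> 'a \<Rightarrow> 'x" and Ys :: "nat \<Rightarrow> 'a \<Rightarrow> real"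
  assumes "\<And>j. j < n \<Longrightarrow> Ys j \<in> borel_measurable M"
    and "{\<omega> \<in> space M. \<forall>j<n. f (Xs j \<omega>) = r j} \<in> events"
  shows "condP M
      (\<lambda>\<omega>. 0 \<le> (\<Sum>s\<in>S. phat n (\<lambda>j. f (Xs j \<omega>)) s
                 * (yhat n (\<lambda>j. f (Xs j \<omega>)) (\<lambda>j. Ys j \<omega>) s - \<mu> s)\<^sup>2)
          \<and> (\<Sum>s\<in>S. phat n (\<lambda>j. f (Xs j \<omega>)) s
                 * (yhat n (\<lambda>j. f (Xs j \<omega>)) (\<lambda>j. Ys j \<omega>) s - \<mu> s)\<^sup>2) \<le> b)
      (\<lambda>\<omega>. \<forall>j<n. f (Xs j \<omega>) = r j)
    = \<P>(\<omega> in uniform_measure M {\<omega> \<in> space M. \<forall>j<n. f (Xs j \<omega>) = r j}.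
          (\<Sum>s\<in>S. phat n r s * (yhat n r (\<lambda>j. Ys j \<omega>) s - \<mu> s)\<^sup>2) \<le> b)"
proof (rule condP_eq_uniform_measure)
  show "Measurable.pred M (\<lambda>\<omega>. (\<Sum>s\<in>S. phat n r s * (yhat n r (\<lambda>j. Ys j \<omega>) s - \<mu> s)\<^sup>2) \<le> b)"
    using assms(1) unfolding yhat_def by measurable
  fix \<omega> assume "\<forall>j<n. f (Xs j \<omega>) = r j"
  then have "phat n (\<lambda>j. f (Xs j \<omega>)) = phat n r" "yhat n (\<lambda>j. f (Xs j \<omega>)) = yhat n r"
    by (auto intro: phat_cong yhat_cong)
  moreover have "0 \<le> (\<Sum>s\<in>S. phat n r s * (yhat n r (\<lambda>j. Ys j \<omega>) s - \<mu> s)\<^sup>2)"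
    by (simp add: phat_nonneg sum_nonneg)
  ultimately show "(0 \<le> (\<Sum>s\<in>S. phat n (\<lambda>j. f (Xs j \<omega>)) s
                 * (yhat n (\<lambda>j. f (Xs j \<omega>)) (\<lambda>j. Ys j \<omega>) s - \<mu> s)\<^sup>2)
          \<and> (\<Sum>s\<in>S. phat n (\<lambda>j. f (Xs j \<omega>)) s
                 * (yhat n (\<lambda>j. f (Xs j \<omega>)) (\<lambda>j. Ys j \<omega>) s - \<mu> s)\<^sup>2) \<le> b)
      = ((\<Sum>s\<in>S. phat n r s * (yhat n r (\<lambda>j. Ys j \<omega>) s - \<mu> s)\<^sup>2) \<le> b)"
    by simp
qed (rule assms(2))

theorem mainTheorem9:
  fixes M :: "'w measure" and N :: "'x measure" and D :: "('x \<times> real) measure"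
    and Xs :: "nat \<Rightarrow> 'w \<Rightarrow> 'x" and Ys :: "nat \<Rightarrow> 'w \<Rightarrow> real"
    and f :: "'x \<Rightarrow> real" and S :: "real set" and n :: nat and c \<delta> :: real
    and r :: "nat \<Rightarrow> real"
  assumes "prob_space M"
    and "0 < n"
    and "prob_space.indep_vars M (\<lambda>_. N \<Otimes>\<^sub>M borel) (\<lambda>j \<omega>. (Xs j \<omega>, Ys j \<omega>)) {..<n}"
    and "\<forall>j<n. distr M (N \<Otimes>\<^sub>M borel) (\<lambda>\<omega>. (Xs j \<omega>, Ys j \<omega>)) = D"
    and "AE z in D. snd z \<in> {0, 1}"
    and "f \<in> borel_measurable N"
    and "finite S" and "S \<subseteq> {0..1}" and "\<forall>x\<in>space N. f x \<in> S"
    and "0 \<le> c" and "c < 0.5" and "0 < \<delta>" and "\<delta> < 1"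
    and "\<forall>j<n. r j \<in> S"
    and "\<forall>s\<in>S. \<bar>phat n r s - pop_p D f s\<bar> < c * pop_p D f s"
  shows "condP M
      (\<lambda>\<omega>. 0 \<le> (\<Sum>s\<in>S. phat n (\<lambda>j. f (Xs j \<omega>)) s
                 * (yhat n (\<lambda>j. f (Xs j \<omega>)) (\<lambda>j. Ys j \<omega>) s - ystar D f s)\<^sup>2)
          \<and> (\<Sum>s\<in>S. phat n (\<lambda>j. f (Xs j \<omega>)) s
                 * (yhat n (\<lambda>j. f (Xs j \<omega>)) (\<lambda>j. Ys j \<omega>) s - ystar D f s)\<^sup>2)
            \<le> real (card S) / (2 * real n) * ln (2 * real (card S) / \<delta>))
      (\<lambda>\<omega>. \<forall>j<n. f (Xs j \<omega>) = r j)
    \<ge> 1 - \<delta>"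
proof -
  interpret prob_space M by fact
  define Q where "Q = {\<omega> \<in> space M. \<forall>j<n. f (Xs j \<omega>) = r j}"
  have pos: "0 < pop_p D f s" "0 < phat n r s" if "s \<in> S" for s
    using relative_error_imp_pos[of "phat n r s" "pop_p D f s" c] assms(10,11,15) that by auto
  have pop_pos: "0 < pop_p D f (r j)" if "j < n" for j
    using pos(1) assms(14) that by blast
  have "AE z in D. snd z \<in> {0..1}"
    using assms(5) by eventually_elim auto
  note labels = labels_conditioned_on_scores[OF assms(3,4) this assms(6) pop_pos Q_def]
  interpret C: prob_space "uniform_measure M Q"
    by (rule labels(2))
  have Q_event: "{\<omega> \<in> space M. \<forall>j<n. f (Xs j \<omega>) = r j} \<in> events"
    using labels(1) unfolding Q_def by blast
  have Ys_measurable: "Ys j \<in> borel_measurable M" if "j < n" for j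
    using labels(3) that
    by (simp add: C.indep_vars_def measurable_cong_sets[OF sets_uniform_measure refl])
  have "1 - \<delta> \<le> \<P>(\<omega> in uniform_measure M Q.
      (\<Sum>s\<in>S. phat n r s * (yhat n r (\<lambda>j. Ys j \<omega>) s - ystar D f s)\<^sup>2)
        \<le> real (card S) / (2 * real n) * ln (2 * real (card S) / \<delta>))"
    using assms(2,14)
    by (intro C.prob_binned_sq_error_le[OF _ labels(3-5) assms(7) _ pos(2) assms(12,13)]) auto
  then show ?thesis
    unfolding Q_def
    by (rule ord_le_eq_trans[OF _ condP_binned_sq_error_eq[where f = f and Xs = Xs,
          OF Ys_measurable Q_event, symmetric]])
qed

end
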